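(* Let $C$ be a linear $[n,k]_q$-code (a $k$-dimensional subspace of $\mathbb F_q^n$, $1\le k\le n$) and let $r$ be an integer with $1\le r\le k$. Then $$d_r(C)\ge\frac{d(C)\,\Delta_r(C)+e(C)\,(q^r-1-\Delta_r(C))}{q^r-q^{r-1}}.$$
   Context: For $x\in\mathbb F_q^n$, $\|x\|=|\{i:x_i\ne0\}|$ is the Hamming norm; for $D\subseteq\mathbb F_q^n$, $\mathrm{supp}(D)=\{i: x_i\ne0\text{ for some }x\in D\}$ and $\|D\|=|\mathrm{supp}(D)|$. $d(C)=\min\{\|x\|: 0\ne x\in C\}$ and $d_r(C)=\min\{\|D\|: D\text{ a subspace of }C,\ \dim D=r\}$. For a subspace $D$ of $C$, $\Delta(D)=|\{x\in D:\|x\|=d(C)\}|$, and $\Delta_r(C)=\max\{\Delta(D): D\text{ a subspace of }C,\ \dim D=r\}$. Let $S_C=\{\|x\|: x\in C,\ \|x\|>d(C)\}$; $e(C)=\min S_C$ if $S_C\ne\emptyset$ and $e(C)=d(C)$ otherwise. *)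

theory Defs
  imports "HOL-Analysis.Analysis"
begin

text \<open>Linear codes over a finite field 'a (q = CARD('a)), vectors in 'a^'n (n = CARD('n)).
Subspaces and dimension are those of the vector space interpretation vec (scaling (*s)).\<close>

definition hnorm :: "'a::field ^ 'n \<Rightarrow> nat" where
  "hnorm x = card {i. x $ i \<noteq> 0}"

definition csupp :: "('a::field ^ 'n) set \<Rightarrow> 'n set" where
  "csupp D = {i. \<exists>x\<in>D. x $ i \<noteq> 0}"

definition snorm :: "('a::field ^ 'n) set \<Rightarrow> nat" where
  "snorm D = card (csupp D)"

definition mindist :: "('a::field ^ 'n) set \<Rightarrow> nat" where
  "mindist C = Min {hnorm x | x. x \<in> C \<and> x \<noteq> 0}"

definition subcodes :: "('a::field ^ 'n) set \<Rightarrow> nat \<Rightarrow> ('a ^ 'n) set set" where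
  "subcodes C r = {D. vec.subspace D \<and> D \<subseteq> C \<and> vec.dim D = r}"

definition ghw :: "('a::field ^ 'n) set \<Rightarrow> nat \<Rightarrow> nat" where
  "ghw C r = Min {snorm D | D. D \<in> subcodes C r}"

definition Delta :: "('a::field ^ 'n) set \<Rightarrow> ('a ^ 'n) set \<Rightarrow> nat" where
  "Delta C D = card {x \<in> D. hnorm x = mindist C}"

definition Delta_r :: "('a::field ^ 'n) set \<Rightarrow> nat \<Rightarrow> nat" where
  "Delta_r C r = Max {Delta C D | D. D \<in> subcodes C r}"

definition S_C :: "('a::field ^ 'n) set \<Rightarrow> nat set" where
  "S_C C = {hnorm x | x. x \<in> C \<and> hnorm x > mindist C}"

definition e_C :: "('a::field ^ 'n) set \<Rightarrow> nat" where
  "e_C C = (if S_C C \<noteq> {} then Min (S_C C) else mindist C)"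

end

theory Submission imports Defs begin

text \<open>Double counting the nonzero coordinates of an \<open>r\<close>-dimensional subcode \<open>D\<close>: every coordinate
in the support of \<open>D\<close> is nonzero on exactly \<open>q^r - q^(r-1)\<close> codewords, so the weights of \<open>D\<close> sum to
\<open>\<parallel>D\<parallel> (q^r - q^(r-1))\<close>. On the other hand \<open>\<Delta>(D)\<close> nonzero codewords have weight \<open>d(C)\<close> and the remaining
\<open>q^r - 1 - \<Delta>(D)\<close> ones have weight at least \<open>e(C)\<close>. Taking for \<open>D\<close> a subcode of minimal support and
using \<open>e(C) \<ge> d(C)\<close> to pass from \<open>\<Delta>(D)\<close> to \<open>\<Delta>\<^sub>r(C) \<ge> \<Delta>(D)\<close> gives the bound.\<close>

lemma inj_on_scale_add_subspace:
  fixes K :: "('a::field ^ 'n) set"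
  assumes K: "vec.subspace K" and v: "v \<notin> K"
  shows "inj_on (\<lambda>(c, y). c *s v + y) (UNIV \<times> K)"
proof (rule inj_onI, clarsimp)
  fix c y c' y'
  assume y: "y \<in> K" and y': "y' \<in> K" and eq: "c *s v + y = c' *s v + y'"
  show "c = c' \<and> y = y'"
  proof (cases "c = c'")
    case True
    then show ?thesis using eq by simp
  next
    case False
    have "(c - c') *s v = y' - y" using eq by (simp add: algebra_simps vector_sub_rdistrib)
    then have "v = inverse (c - c') *s (y' - y)" using False
      by (metis eq_iff_diff_eq_0 vector_smult_assoc vector_smult_lid field_class.field_inverse)
    then have "v \<in> K" using K y y' by (simp add: vec.subspace_diff vec.subspace_scale)
    with v show ?thesis by simp
  qed
qed

lemma card_scale_add_subspace:
  fixes K :: "('a::{finite,field} ^ 'n) set"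
  assumes "vec.subspace K" and "v \<notin> K"
  shows "card ((\<lambda>(c, y). c *s v + y) ` (UNIV \<times> K)) = CARD('a) * card K"
  using card_image[OF inj_on_scale_add_subspace[OF assms]] by (simp add: card_cartesian_product)

lemma card_span_independent:
  fixes B :: "('a::{finite,field} ^ 'n) set"
  assumes "vec.independent B"
  shows "card (vec.span B) = CARD('a) ^ card B"
proof -
  have "finite B" using assms vec.finiteI_independent by blast
  from this assms show ?thesis
  proof (induction B rule: finite_induct)
    case empty
    then show ?case by simp
  next
    case (insert b B)
    have b: "b \<notin> vec.span B" and B: "vec.independent B"
      using insert.prems insert.hyps vec.independent_insert[of b B] by simp_all
    have "vec.span (insert b B) = (\<lambda>(c, y). c *s b + y) ` (UNIV \<times> vec.span B)"
    proof (intro equalityI subsetI)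
      fix x assume "x \<in> vec.span (insert b B)"
      then obtain c where "x - c *s b \<in> vec.span B" unfolding vec.span_insert by blast
      then show "x \<in> (\<lambda>(c, y). c *s b + y) ` (UNIV \<times> vec.span B)"
        by (intro image_eqI[of _ _ "(c, x - c *s b)"]) auto
    next
      fix x assume "x \<in> (\<lambda>(c, y). c *s b + y) ` (UNIV \<times> vec.span B)"
      then obtain c y where x: "x = c *s b + y" and y: "y \<in> vec.span B" by auto
      have "y \<in> vec.span (insert b B)" using y vec.span_mono[of B "insert b B"] by blast
      then show "x \<in> vec.span (insert b B)"
        unfolding x by (simp add: vec.span_add vec.span_scale vec.span_base)
    qed
    then show ?case
      using card_scale_add_subspace[OF vec.subspace_span b] insert B by simp
  qed
qed

lemma card_subspace:
  fixes D :: "('a::{finite,field} ^ 'n) set"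
  assumes "vec.subspace D"
  shows "card D = CARD('a) ^ vec.dim D"
proof -
  obtain B where B: "B \<subseteq> D" "vec.independent B" "D \<subseteq> vec.span B" "card B = vec.dim D"
    using vec.basis_exists by blast
  then have "vec.span B = D" using assms vec.span_minimal by blast
  then show ?thesis using card_span_independent[OF B(2)] B(4) by simp
qed

lemma card_coordinate_nonzero_subspace:
  fixes D :: "('a::{finite,field} ^ 'n) set"
  assumes D: "vec.subspace D" and r: "vec.dim D = r" "1 \<le> r"
    and v: "v \<in> D" and vi: "v $ i \<noteq> 0"
  shows "card {x\<in>D. x $ i \<noteq> 0} = CARD('a) ^ r - CARD('a) ^ (r - 1)"
proof -
  define K where "K = {x\<in>D. x $ i = 0}"
  have K: "vec.subspace K"
    using D unfolding K_def vec.subspace_def by auto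
  have "D = (\<lambda>(c, y). c *s v + y) ` (UNIV \<times> K)"
  proof (intro equalityI subsetI)
    fix x assume x: "x \<in> D"
    define c where "c = x $ i / v $ i"
    have "x - c *s v \<in> K"
      using x v D vi unfolding K_def c_def by (simp add: vec.subspace_diff vec.subspace_scale)
    then show "x \<in> (\<lambda>(c, y). c *s v + y) ` (UNIV \<times> K)"
      by (intro image_eqI[of _ _ "(c, x - c *s v)"]) auto
  next
    fix x assume "x \<in> (\<lambda>(c, y). c *s v + y) ` (UNIV \<times> K)"
    then show "x \<in> D"
      using D v unfolding K_def by (auto simp: vec.subspace_add vec.subspace_scale)
  qed
  then have "CARD('a) ^ r = CARD('a) * card K"
    using card_scale_add_subspace[OF K, of v] vi card_subspace[OF D] r unfolding K_def by simp
  moreover have "CARD('a) ^ r = CARD('a) * CARD('a) ^ (r - 1)"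
    using r by (simp flip: power_Suc)
  ultimately have "card K = CARD('a) ^ (r - 1)" by simp
  moreover have "{x\<in>D. x $ i \<noteq> 0} = D - K" unfolding K_def by auto
  ultimately show ?thesis
    using card_subspace[OF D] r by (simp add: card_Diff_subset K_def)
qed

lemma sum_hnorm_subspace:
  fixes D :: "('a::{finite,field} ^ 'n) set"
  assumes D: "vec.subspace D" and r: "vec.dim D = r" "1 \<le> r"
  shows "(\<Sum>x\<in>D. hnorm x) = snorm D * (CARD('a) ^ r - CARD('a) ^ (r - 1))"
proof -
  have "(\<Sum>x\<in>D. hnorm x) = (\<Sum>x\<in>D. \<Sum>i\<in>UNIV. if x $ i \<noteq> 0 then 1 else (0::nat))"
    unfolding hnorm_def by (simp add: sum.If_cases)
  also have "\<dots> = (\<Sum>i\<in>UNIV. card {x\<in>D. x $ i \<noteq> 0})"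
    by (subst sum.swap) (simp add: sum.If_cases Int_def conj_commute)
  also have "\<dots> = (\<Sum>i\<in>csupp D. CARD('a) ^ r - CARD('a) ^ (r - 1))"
  proof (rule sum.mono_neutral_cong_right)
    show "\<forall>i\<in>UNIV - csupp D. card {x\<in>D. x $ i \<noteq> 0} = 0"
      unfolding csupp_def by auto
    show "card {x\<in>D. x $ i \<noteq> 0} = CARD('a) ^ r - CARD('a) ^ (r - 1)" if "i \<in> csupp D" for i
      using that card_coordinate_nonzero_subspace[OF D r] unfolding csupp_def by blast
  qed simp_all
  finally show ?thesis by (simp add: snorm_def)
qed

lemma sum_ge_level_count:
  fixes h :: "'b \<Rightarrow> nat"
  assumes D: "finite D" "z \<in> D" "h z \<noteq> d"
    and above: "\<And>x. x \<in> D \<Longrightarrow> x \<noteq> z \<Longrightarrow> h x \<noteq> d \<Longrightarrow> e \<le> h x"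
  shows "real d * card {x\<in>D. h x = d} + real e * (real (card D) - 1 - card {x\<in>D. h x = d})
    \<le> (\<Sum>x\<in>D. real (h x))"
proof -
  define A where "A = {x\<in>D. h x = d}"
  define R where "R = D - A - {z}"
  have split: "D = insert z (A \<union> R)" "z \<notin> A \<union> R" "A \<inter> R = {}"
    using D unfolding A_def R_def by auto
  have fin: "finite A" "finite R" using D(1) unfolding A_def R_def by auto
  have card_D: "card D = 1 + card A + card R"
    using fin split by (simp add: card_Un_disjoint)
  have "(\<Sum>x\<in>D. real (h x)) = h z + (\<Sum>x\<in>A. real (h x)) + (\<Sum>x\<in>R. real (h x))"
    using fin split by (simp add: sum.union_disjoint)
  moreover have "(\<Sum>x\<in>A. real (h x)) = real d * card A" unfolding A_def by simp
  moreover have "(\<Sum>x\<in>R. real (h x)) \<ge> real e * card R"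
    using sum_mono[of R "\<lambda>_. real e" "\<lambda>x. real (h x)"] above unfolding R_def A_def
    by (auto simp: mult.commute)
  ultimately show ?thesis unfolding A_def[symmetric] using card_D by simp
qed

lemma mindist_le_hnorm:
  fixes C :: "('a::{finite,field} ^ 'n) set"
  assumes "x \<in> C" "x \<noteq> 0"
  shows "mindist C \<le> hnorm x"
  unfolding mindist_def using assms by (intro Min_le) auto

lemma mindist_pos:
  fixes C :: "('a::{finite,field} ^ 'n) set"
  assumes "x \<in> C" "x \<noteq> 0"
  shows "mindist C > 0"
proof -
  have "mindist C \<in> {hnorm x | x. x \<in> C \<and> x \<noteq> 0}"
    unfolding mindist_def using assms by (intro Min_in) auto
  then show ?thesis by (auto simp: hnorm_def vec_eq_iff card_gt_0_iff)
qed

lemma e_C_le_hnorm: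
  fixes C :: "('a::{finite,field} ^ 'n) set"
  assumes "x \<in> C" "x \<noteq> 0" "hnorm x \<noteq> mindist C"
  shows "e_C C \<le> hnorm x"
proof -
  have "hnorm x \<in> S_C C"
    using assms mindist_le_hnorm[OF assms(1,2)] unfolding S_C_def by force
  then show ?thesis unfolding e_C_def S_C_def by auto
qed

lemma mindist_le_e_C: "mindist C \<le> e_C (C :: ('a::{finite,field} ^ 'n) set)"
proof (cases "S_C C = {}")
  case False
  then have "Min (S_C C) \<in> S_C C" unfolding S_C_def by (intro Min_in) auto
  then show ?thesis using False unfolding e_C_def S_C_def by auto
qed (simp add: e_C_def)

lemma subcodes_nonempty:
  fixes C :: "('a::field ^ 'n) set"
  assumes C: "vec.subspace C" and r: "r \<le> vec.dim C"
  shows "subcodes C r \<noteq> {}"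
proof -
  obtain B where B: "B \<subseteq> C" "vec.independent B" "C \<subseteq> vec.span B" "card B = vec.dim C"
    by (rule vec.basis_exists)
  have "r \<le> card B" using B(4) r by linarith
  then obtain B' where B': "B' \<subseteq> B" "card B' = r" by (rule obtain_subset_with_card_n)
  have B'_indep: "vec.independent B'" using B(2) B'(1) by (rule vec.independent_mono)
  have "vec.span B' \<subseteq> C" using B(1) B'(1) C by (intro vec.span_minimal) auto
  then have "vec.span B' \<in> subcodes C r"
    unfolding subcodes_def using B'(2) vec.dim_span_eq_card_independent[OF B'_indep] by simp
  then show ?thesis by blast
qed

lemma ghw_attained:
  fixes C :: "('a::{finite,field} ^ 'n) set"
  assumes "subcodes C r \<noteq> {}"
  obtains D where "D \<in> subcodes C r" "ghw C r = snorm D"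
proof -
  have "ghw C r \<in> {snorm D | D. D \<in> subcodes C r}"
    unfolding ghw_def using assms by (intro Min_in) auto
  then show ?thesis using that by blast
qed

lemma Delta_le_Delta_r:
  fixes C :: "('a::{finite,field} ^ 'n) set"
  assumes "D \<in> subcodes C r"
  shows "Delta C D \<le> Delta_r C r"
  unfolding Delta_r_def using assms by (intro Max_ge) auto

lemma snorm_subcode_lower_bound:
  fixes C :: "('a::{finite,field} ^ 'n) set"
  assumes C: "x \<in> C" "x \<noteq> 0" and D: "D \<in> subcodes C r" and r: "1 \<le> r"
  shows "real (mindist C) * Delta C D + real (e_C C) * (real CARD('a) ^ r - 1 - Delta C D)
    \<le> real (snorm D) * (real CARD('a) ^ r - real CARD('a) ^ (r - 1))"
proof -
  have D: "vec.subspace D" "D \<subseteq> C" "vec.dim D = r" using D unfolding subcodes_def by auto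
  have "real (mindist C) * Delta C D + real (e_C C) * (real (card D) - 1 - Delta C D)
      \<le> (\<Sum>y\<in>D. real (hnorm y))"
    unfolding Delta_def
  proof (rule sum_ge_level_count)
    show "0 \<in> D" using D(1) by (rule vec.subspace_0)
    show "hnorm 0 \<noteq> mindist C" using mindist_pos[OF C] by (simp add: hnorm_def)
    show "e_C C \<le> hnorm y" if "y \<in> D" "y \<noteq> 0" "hnorm y \<noteq> mindist C" for y
      using that D(2) e_C_le_hnorm by blast
  qed simp
  also have "\<dots> = real (snorm D * (CARD('a) ^ r - CARD('a) ^ (r - 1)))"
    using sum_hnorm_subspace[OF D(1,3) r] by (simp flip: of_nat_sum)
  also have "\<dots> = real (snorm D) * (real CARD('a) ^ r - real CARD('a) ^ (r - 1))"
    by (simp add: power_increasing)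
  finally show ?thesis using card_subspace[OF D(1)] D(3) by simp
qed

theorem theorem4p2:
  fixes C :: "('a::{finite,field} ^ 'n) set" and k r :: nat
  assumes "vec.subspace C" and "vec.dim C = k"
    and "1 \<le> k" and "k \<le> CARD('n)"
    and "1 \<le> r" and "r \<le> k"
  shows "real (ghw C r) \<ge>
    (real (mindist C) * real (Delta_r C r)
      + real (e_C C) * (real CARD('a) ^ r - 1 - real (Delta_r C r)))
    / (real CARD('a) ^ r - real CARD('a) ^ (r - 1))"
proof -
  obtain x where x: "x \<in> C" "x \<noteq> 0" using assms(2,3) vec.dim_eq_0[of C] by auto
  have "subcodes C r \<noteq> {}" using assms(1,2,6) by (intro subcodes_nonempty) auto
  then obtain D where D: "D \<in> subcodes C r" "ghw C r = snorm D" by (rule ghw_attained)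
  define q where "q = real CARD('a)"
  have "card {0::'a, 1} \<le> CARD('a)" by (rule card_mono) auto
  then have q: "q ^ (r - 1) < q ^ r" unfolding q_def using assms(5) by (intro power_strict_increasing) auto
  have "0 \<le> (real (e_C C) - mindist C) * (real (Delta_r C r) - Delta C D)"
    using mindist_le_e_C[of C] Delta_le_Delta_r[OF D(1)] by (intro mult_nonneg_nonneg) auto
  then have "real (mindist C) * Delta_r C r + real (e_C C) * (q ^ r - 1 - Delta_r C r)
      \<le> real (mindist C) * Delta C D + real (e_C C) * (q ^ r - 1 - Delta C D)"
    by (simp add: algebra_simps)
  then show ?thesis
    using snorm_subcode_lower_bound[OF x D(1) assms(5)] D(2) q unfolding q_def
    by (simp add: divide_le_eq)
qed

end
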